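(* Let $0<\alpha<1$ and $1\le i\le k\le 6$, and let $\omega^{(k,i)}_m$, $m\ge0$, be the convolution weights defined in the context. Then $\sum_{m=0}^{\infty}|\omega^{(k,i)}_m|<\infty$.
   Context: Uniform grid $t_n=n\Delta t$, $\Delta t>0$, $I_j=[t_{j-1},t_j]$. For a function $u$ and integers $m\ge1$, $j$, $q$, let $p^{m}_{j,q}$ be the polynomial of degree at most $m$ interpolating $u$ at $t_{j+q-m-1},\dots,t_{j+q-1}$. For $1\le i\le k\le 6$ and $n\ge k$, let $P^{k}_{i,n}$ be the continuous piecewise polynomial on $[0,t_n]$ equal on $I_j$ to $p^{k-1}_{j,k-j}$ for $1\le j\le k-i$, to $p^{k}_{j,i}$ for $k-i+1\le j\le n-i+1$, and to $p^{k}_{j,n+1-j}$ for $n-i+2\le j\le n$, and set $D^{\alpha}_{k,i}u_n=\frac{1}{\Gamma(1-\alpha)}\int_0^{t_n}(t_n-\xi)^{-\alpha}(P^{k}_{i,n})'(\xi)\,\mathrm{d}\xi$. This is a linear combination of $u_0=u(t_0),\dots,u_n=u(t_n)$; for $k\le j\le n$ the coefficient of $u_j$ in $(\Delta t)^{\alpha}D^{\alpha}_{k,i}u_n$ depends only on $n-j$ and is denoted $\omega^{(k,i)}_{n-j}$; this defines $\omega^{(k,i)}_m$ for all $m\ge 0$. *)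

theory Defs
  imports "HOL-Analysis.Analysis"
begin

definition grid :: "real \<Rightarrow> nat \<Rightarrow> real" where
  "grid dt a = real a * dt"

definition lagr :: "real \<Rightarrow> (nat \<Rightarrow> real) \<Rightarrow> nat set \<Rightarrow> real \<Rightarrow> real" where
  "lagr dt v N t = (\<Sum>a\<in>N. v a * (\<Prod>b\<in>N - {a}. (t - grid dt b) / (grid dt a - grid dt b)))"

definition nodes :: "nat \<Rightarrow> nat \<Rightarrow> nat \<Rightarrow> nat set" where
  "nodes m j q = nat ` {int j + int q - int m - 1 .. int j + int q - 1}"

definition piece_nodes :: "nat \<Rightarrow> nat \<Rightarrow> nat \<Rightarrow> nat \<Rightarrow> nat set" where
  "piece_nodes k i n j =
     (if j \<le> k - i then nodes (k - 1) j (k - j)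
      else if j \<le> n - i + 1 then nodes k j i
      else nodes k j (n + 1 - j))"

text \<open>D^alpha_{k,i} u_n, for grid data v (u_a = v a); the integral over [0,t_n]
  is split over the intervals I_j, on which (P^k_{i,n})' is the derivative of
  the corresponding interpolating polynomial.\<close>
definition Dfrac :: "nat \<Rightarrow> nat \<Rightarrow> real \<Rightarrow> real \<Rightarrow> (nat \<Rightarrow> real) \<Rightarrow> nat \<Rightarrow> real" where
  "Dfrac k i \<alpha> dt v n =
     1 / Gamma (1 - \<alpha>) *
     (\<Sum>j=1..n. integral {grid dt (j - 1) .. grid dt j}
        (\<lambda>\<xi>. (grid dt n - \<xi>) powr (- \<alpha>) * deriv (lagr dt v (piece_nodes k i n j)) \<xi>))"

text \<open>Coefficient of u_j in (dt)^alpha D^alpha_{k,i} u_n (by linearity, the value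
  on the discrete Kronecker delta at j).\<close>
definition coeff :: "nat \<Rightarrow> nat \<Rightarrow> real \<Rightarrow> real \<Rightarrow> nat \<Rightarrow> nat \<Rightarrow> real" where
  "coeff k i \<alpha> dt n j = dt powr \<alpha> * Dfrac k i \<alpha> dt (\<lambda>a. if a = j then 1 else 0) n"

text \<open>omega^{(k,i)}_m = coefficient of u_j with n - j = m, taking j = k, n = m + k.\<close>
definition omega :: "nat \<Rightarrow> nat \<Rightarrow> real \<Rightarrow> real \<Rightarrow> nat \<Rightarrow> real" where
  "omega k i \<alpha> dt m = coeff k i \<alpha> dt (m + k) k"

end

theory Submission
  imports Defs "HOL-Computational_Algebra.Polynomial"
begin

text \<open>
  The weight \<open>\<omega>\<^sub>m\<close> is the scheme at \<open>t\<^sub>m\<^sub>+\<^sub>k\<close> applied to the Kronecker delta at node \<open>k\<close>.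
  That node lies in the interpolation stencils of the first \<open>2k + 1\<close> intervals only, and for
  large \<open>m\<close> the pieces on these intervals no longer depend on \<open>m\<close>. So \<open>\<omega>\<^sub>m\<close> is a fixed
  finite sum of integrals of fixed polynomial derivatives against the kernel \<open>(t - \<xi>) powr -\<alpha>\<close>,
  \<open>t = t\<^sub>m\<^sub>+\<^sub>k\<close>. Freezing the kernel at \<open>\<xi> = 0\<close> leaves a telescoping sum of nodal values of the
  delta, which is zero; the error is at most \<open>C ((t - t\<^sub>2\<^sub>k\<^sub>+\<^sub>1) powr -\<alpha> - t powr -\<alpha>)\<close>, which
  telescopes in \<open>m\<close> and is therefore summable.
\<close>

lemma lagr_eq_poly: "\<exists>p. lagr dt v N = poly p"
proof
  let ?p = "\<Sum>a\<in>N. smult (v a) (\<Prod>b\<in>N - {a}.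
      [: - grid dt b / (grid dt a - grid dt b), 1 / (grid dt a - grid dt b) :])"
  show "lagr dt v N = poly ?p"
    by (rule ext) (simp add: lagr_def poly_sum poly_prod diff_divide_distrib)
qed

lemma lagr_has_real_derivative: "(lagr dt v N has_real_derivative deriv (lagr dt v N) x) (at x)"
proof -
  obtain p where p: "lagr dt v N = poly p" using lagr_eq_poly by blast
  have "deriv (poly p) x = poly (pderiv p) x" by (intro DERIV_imp_deriv poly_DERIV)
  then show ?thesis by (simp add: p poly_DERIV)
qed

lemma continuous_on_deriv_lagr: "continuous_on S (deriv (lagr dt v N))"
proof -
  obtain p where p: "lagr dt v N = poly p" using lagr_eq_poly by blast
  have "deriv (poly p) = (\<lambda>x. poly (pderiv p) x)" by (intro ext DERIV_imp_deriv poly_DERIV)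
  then show ?thesis by (simp add: p continuous_intros)
qed

lemma lagr_grid_node:
  assumes "finite N" "c \<in> N" "dt \<noteq> 0"
  shows "lagr dt v N (grid dt c) = v c"
proof -
  have grid_inj: "grid dt a = grid dt b \<longleftrightarrow> a = b" for a b
    using assms(3) by (auto simp: grid_def)
  have "lagr dt v N (grid dt c) =
      v c * (\<Prod>b\<in>N - {c}. (grid dt c - grid dt b) / (grid dt c - grid dt b))
      + (\<Sum>a\<in>N - {c}. v a * (\<Prod>b\<in>N - {a}. (grid dt c - grid dt b) / (grid dt a - grid dt b)))"
    unfolding lagr_def using assms by (simp add: sum.remove)
  also have "(\<Prod>b\<in>N - {c}. (grid dt c - grid dt b) / (grid dt c - grid dt b)) = 1"
    by (rule prod.neutral) (use grid_inj in auto)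
  also have "(\<Sum>a\<in>N - {c}. v a * (\<Prod>b\<in>N - {a}. (grid dt c - grid dt b) / (grid dt a - grid dt b))) = 0"
    using assms by (intro sum.neutral ballI) (auto simp: prod_zero_iff)
  finally show ?thesis by simp
qed

lemma lagr_eq_zero: "(\<And>a. a \<in> N \<Longrightarrow> v a = 0) \<Longrightarrow> lagr dt v N = (\<lambda>_. 0)"
  by (auto simp: lagr_def intro!: ext sum.neutral)

lemma finite_nodes: "finite (nodes m j q)"
  by (simp add: nodes_def)

lemma nodes_lower_bound: "x \<in> nodes m j q \<Longrightarrow> int j + int q - int m - 1 \<le> int x"
  by (auto simp: nodes_def)

lemma mem_nodesI:
  "int j + int q - int m - 1 \<le> int x \<Longrightarrow> int x \<le> int j + int q - 1 \<Longrightarrow> x \<in> nodes m j q"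
  unfolding nodes_def by (rule image_eqI[of _ _ "int x"]) auto

text \<open>Stencils of the pieces of \<open>P\<^sup>k\<^sub>i\<^sub>,\<^sub>n\<close> on \<open>I\<^sub>j\<close> for \<open>j \<le> n - i + 1\<close>; they do not depend on \<open>n\<close>.\<close>
definition left_piece_nodes :: "nat \<Rightarrow> nat \<Rightarrow> nat \<Rightarrow> nat set" where
  "left_piece_nodes k i j = (if j \<le> k - i then nodes (k - 1) j (k - j) else nodes k j i)"

lemma piece_nodes_eq_left_piece_nodes:
  "j \<le> n - i + 1 \<Longrightarrow> piece_nodes k i n j = left_piece_nodes k i j"
  by (simp add: piece_nodes_def left_piece_nodes_def)

lemma finite_left_piece_nodes: "finite (left_piece_nodes k i j)"
  by (simp add: left_piece_nodes_def finite_nodes)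

lemma endpoints_mem_left_piece_nodes:
  assumes "1 \<le> i" "i \<le> k" "1 \<le> j"
  shows "j - 1 \<in> left_piece_nodes k i j" "j \<in> left_piece_nodes k i j"
proof -
  have "j - 1 \<in> nodes (k - 1) j (k - j) \<and> j \<in> nodes (k - 1) j (k - j)" if "j \<le> k - i"
    using assms that by (auto simp: of_nat_diff intro!: mem_nodesI)
  moreover have "j - 1 \<in> nodes k j i \<and> j \<in> nodes k j i"
    using assms by (auto simp: of_nat_diff intro!: mem_nodesI)
  ultimately show "j - 1 \<in> left_piece_nodes k i j" "j \<in> left_piece_nodes k i j"
    by (auto simp: left_piece_nodes_def)
qed

lemma notin_piece_nodes:
  assumes "2 * k + 1 < j" "2 * k < n"
  shows "k \<notin> piece_nodes k i n j"
proof
  assume k: "k \<in> piece_nodes k i n j"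
  show False
  proof (cases "j \<le> n - i + 1")
    case True
    then have "k \<in> nodes k j i" using k assms by (auto simp: piece_nodes_def split: if_split_asm)
    then show False using nodes_lower_bound assms by fastforce
  next
    case False
    then have "k \<in> nodes k j (n + 1 - j)" using k assms by (auto simp: piece_nodes_def split: if_split_asm)
    then show False using nodes_lower_bound assms by (fastforce simp: of_nat_diff)
  qed
qed

lemma omega_eq_sum_left_pieces:
  assumes "i \<le> k" "2 * k + 2 \<le> m"
  shows "omega k i \<alpha> dt m = dt powr \<alpha> * (1 / Gamma (1 - \<alpha>)) *
    (\<Sum>j=1..2*k+1. integral {grid dt (j - 1)..grid dt j} (\<lambda>\<xi>. (grid dt (m + k) - \<xi>) powr (-\<alpha>) *
       deriv (lagr dt (\<lambda>a. if a = k then 1 else 0) (left_piece_nodes k i j)) \<xi>))"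
proof -
  let ?\<delta> = "\<lambda>a. if a = k then 1 else 0 :: real"
  let ?I = "\<lambda>N j. integral {grid dt (j - 1)..grid dt j}
      (\<lambda>\<xi>. (grid dt (m + k) - \<xi>) powr (-\<alpha>) * deriv (lagr dt ?\<delta> N) \<xi>)"
  have vanish: "?I (piece_nodes k i (m + k) j) j = 0" if "2 * k + 1 < j" for j
  proof -
    have "k \<notin> piece_nodes k i (m + k) j" using assms that by (intro notin_piece_nodes) auto
    then have "lagr dt ?\<delta> (piece_nodes k i (m + k) j) = (\<lambda>_. 0)" by (intro lagr_eq_zero) auto
    then show ?thesis by simp
  qed
  have "(\<Sum>j=1..m+k. ?I (piece_nodes k i (m + k) j) j) = (\<Sum>j=1..2*k+1. ?I (piece_nodes k i (m + k) j) j)"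
    using assms vanish by (intro sum.mono_neutral_right) auto
  also have "\<dots> = (\<Sum>j=1..2*k+1. ?I (left_piece_nodes k i j) j)"
  proof (rule sum.cong)
    fix j assume "j \<in> {1..2*k+1}"
    then have "piece_nodes k i (m + k) j = left_piece_nodes k i j"
      using assms by (intro piece_nodes_eq_left_piece_nodes) auto
    then show "?I (piece_nodes k i (m + k) j) j = ?I (left_piece_nodes k i j) j" by simp
  qed simp
  finally show ?thesis by (simp add: omega_def coeff_def Dfrac_def)
qed

text \<open>Freezing the kernel at \<open>\<xi> = 0\<close> costs at most its oscillation on \<open>[0, s]\<close>.\<close>
lemma integral_weight_deriv_approx:
  fixes f f' :: "real \<Rightarrow> real"
  assumes "0 \<le> a" "a \<le> b" "b \<le> s" "s < T" "0 < \<alpha>"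
    and f: "\<And>x. x \<in> {a..b} \<Longrightarrow> (f has_real_derivative f' x) (at x)"
    and cont: "continuous_on {a..b} f'"
    and bound: "\<And>x. x \<in> {a..b} \<Longrightarrow> \<bar>f' x\<bar> \<le> B"
  shows "\<bar>integral {a..b} (\<lambda>\<xi>. (T - \<xi>) powr (-\<alpha>) * f' \<xi>) - T powr (-\<alpha>) * (f b - f a)\<bar>
         \<le> B * ((T - s) powr (-\<alpha>) - T powr (-\<alpha>)) * (b - a)"
proof -
  define g where "g \<xi> = (T - \<xi>) powr (-\<alpha>)" for \<xi>
  have "continuous_on {a..b} g" unfolding g_def by (intro continuous_intros) (use assms in auto)
  then have cont_err: "continuous_on {a..b} (\<lambda>\<xi>. (g \<xi> - g 0) * f' \<xi>)"
    by (intro continuous_intros cont)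
  have "(f' has_integral f b - f a) {a..b}"
    using f by (intro fundamental_theorem_of_calculus[OF assms(2)])
      (simp add: has_real_derivative_iff_has_vector_derivative[symmetric] has_field_derivative_at_within)
  then have "((\<lambda>\<xi>. (g \<xi> - g 0) * f' \<xi> + g 0 * f' \<xi>) has_integral
      integral {a..b} (\<lambda>\<xi>. (g \<xi> - g 0) * f' \<xi>) + g 0 * (f b - f a)) {a..b}"
    by (intro has_integral_add integrable_integral integrable_continuous_real cont_err
        has_integral_mult_right)
  then have split: "integral {a..b} (\<lambda>\<xi>. g \<xi> * f' \<xi>) - g 0 * (f b - f a) =
      integral {a..b} (\<lambda>\<xi>. (g \<xi> - g 0) * f' \<xi>)"
    by (simp add: algebra_simps integral_unique)
  have "norm (integral {a..b} (\<lambda>\<xi>. (g \<xi> - g 0) * f' \<xi>)) \<le> B * (g s - g 0) * (b - a)"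
  proof (rule integral_bound[OF assms(2) cont_err])
    fix x assume x: "x \<in> {a..b}"
    have "g 0 \<le> g x" "g x \<le> g s" unfolding g_def using x assms by (auto intro!: powr_mono2')
    then show "norm ((g x - g 0) * f' x) \<le> B * (g s - g 0)"
      using bound[OF x] by (simp add: abs_mult mult.commute mult_mono)
  qed
  then show ?thesis using split by (simp add: g_def)
qed

lemma sum_integral_weight_deriv_approx:
  fixes f f' :: "nat \<Rightarrow> real \<Rightarrow> real" and u B :: "nat \<Rightarrow> real"
  assumes "0 < dt" "0 < \<alpha>" "grid dt W < T"
    and f: "\<And>j x. j \<in> {1..W} \<Longrightarrow> x \<in> {grid dt (j - 1)..grid dt j} \<Longrightarrow>
      (f j has_real_derivative f' j x) (at x)"
    and cont: "\<And>j. j \<in> {1..W} \<Longrightarrow> continuous_on {grid dt (j - 1)..grid dt j} (f' j)"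
    and bound: "\<And>j x. j \<in> {1..W} \<Longrightarrow> x \<in> {grid dt (j - 1)..grid dt j} \<Longrightarrow>
      \<bar>f' j x\<bar> \<le> B j"
    and nodal: "\<And>j. j \<in> {1..W} \<Longrightarrow> f j (grid dt (j - 1)) = u (j - 1) \<and> f j (grid dt j) = u j"
  shows "\<bar>(\<Sum>j=1..W. integral {grid dt (j - 1)..grid dt j} (\<lambda>\<xi>. (T - \<xi>) powr (-\<alpha>) * f' j \<xi>))
      - T powr (-\<alpha>) * (u W - u 0)\<bar>
    \<le> (\<Sum>j=1..W. B j) * dt * ((T - grid dt W) powr (-\<alpha>) - T powr (-\<alpha>))"
proof -
  have "T powr (-\<alpha>) * (u W - u 0) = (\<Sum>j=1..W. T powr (-\<alpha>) * (u j - u (j - 1)))"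
    using sum_telescope''[of 0 W u] by (simp add: sum_distrib_left[symmetric])
  then have "\<bar>(\<Sum>j=1..W. integral {grid dt (j - 1)..grid dt j} (\<lambda>\<xi>. (T - \<xi>) powr (-\<alpha>) * f' j \<xi>))
      - T powr (-\<alpha>) * (u W - u 0)\<bar>
    \<le> (\<Sum>j=1..W. \<bar>integral {grid dt (j - 1)..grid dt j} (\<lambda>\<xi>. (T - \<xi>) powr (-\<alpha>) * f' j \<xi>)
      - T powr (-\<alpha>) * (u j - u (j - 1))\<bar>)"
    by (simp add: sum_subtractf[symmetric] sum_abs)
  also have "\<dots> \<le> (\<Sum>j=1..W. B j * ((T - grid dt W) powr (-\<alpha>) - T powr (-\<alpha>)) * dt)"
  proof (rule sum_mono)
    fix j assume j: "j \<in> {1..W}"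
    have "grid dt j - grid dt (j - 1) = dt" using j by (auto simp: grid_def of_nat_diff algebra_simps)
    moreover have "\<bar>integral {grid dt (j - 1)..grid dt j} (\<lambda>\<xi>. (T - \<xi>) powr (-\<alpha>) * f' j \<xi>)
        - T powr (-\<alpha>) * (f j (grid dt j) - f j (grid dt (j - 1)))\<bar>
      \<le> B j * ((T - grid dt W) powr (-\<alpha>) - T powr (-\<alpha>)) * (grid dt j - grid dt (j - 1))"
      using assms j by (intro integral_weight_deriv_approx) (auto simp: grid_def)
    ultimately show "\<bar>integral {grid dt (j - 1)..grid dt j} (\<lambda>\<xi>. (T - \<xi>) powr (-\<alpha>) * f' j \<xi>)
        - T powr (-\<alpha>) * (u j - u (j - 1))\<bar> \<le> B j * ((T - grid dt W) powr (-\<alpha>) - T powr (-\<alpha>)) * dt"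
      using nodal[OF j] by simp
  qed
  also have "\<dots> = (\<Sum>j=1..W. B j) * dt * ((T - grid dt W) powr (-\<alpha>) - T powr (-\<alpha>))"
    by (simp add: sum_distrib_left sum_distrib_right mult_ac)
  finally show ?thesis .
qed

lemma omega_tail_bound:
  assumes "0 < \<alpha>" "1 \<le> i" "i \<le> k" "0 < dt"
  obtains C where "\<And>m. 2 * k + 2 \<le> m \<Longrightarrow> \<bar>omega k i \<alpha> dt m\<bar> \<le>
    C * ((grid dt (m + k) - grid dt (2 * k + 1)) powr (-\<alpha>) - grid dt (m + k) powr (-\<alpha>))"
proof -
  define \<delta> where "\<delta> = (\<lambda>a. if a = k then 1 else 0 :: real)"
  define f where "f j = lagr dt \<delta> (left_piece_nodes k i j)" for j
  have "\<exists>B. \<forall>x\<in>{grid dt (j - 1)..grid dt j}. \<bar>deriv (f j) x\<bar> \<le> B" for j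
    unfolding f_def using compact_imp_bounded[OF compact_continuous_image[OF continuous_on_deriv_lagr]]
    by (auto simp: bounded_iff)
  then obtain B where B: "\<And>j x. x \<in> {grid dt (j - 1)..grid dt j} \<Longrightarrow> \<bar>deriv (f j) x\<bar> \<le> B j"
    by metis
  have nodal: "f j (grid dt a) = \<delta> a" if "1 \<le> j" "a = j - 1 \<or> a = j" for j a
    unfolding f_def using that assms endpoints_mem_left_piece_nodes
    by (intro lagr_grid_node finite_left_piece_nodes) auto
  show thesis
  proof
    fix m assume m: "2 * k + 2 \<le> m"
    let ?T = "grid dt (m + k)"
    let ?S = "\<Sum>j=1..2*k+1. integral {grid dt (j - 1)..grid dt j}
      (\<lambda>\<xi>. (?T - \<xi>) powr (-\<alpha>) * deriv (f j) \<xi>)"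
    have "\<bar>?S - ?T powr (-\<alpha>) * (\<delta> (2 * k + 1) - \<delta> 0)\<bar>
      \<le> (\<Sum>j=1..2*k+1. B j) * dt * ((?T - grid dt (2 * k + 1)) powr (-\<alpha>) - ?T powr (-\<alpha>))"
    proof (rule sum_integral_weight_deriv_approx[where f = f and u = \<delta>])
      show "grid dt (2 * k + 1) < ?T" using assms m by (simp add: grid_def)
    qed (use assms nodal B in \<open>auto simp: f_def lagr_has_real_derivative continuous_on_deriv_lagr\<close>)
    moreover have "\<delta> (2 * k + 1) = 0" "\<delta> 0 = 0" using assms by (auto simp: \<delta>_def)
    ultimately have S_bound: "\<bar>?S\<bar> \<le> (\<Sum>j=1..2*k+1. B j) * dt *
        ((?T - grid dt (2 * k + 1)) powr (-\<alpha>) - ?T powr (-\<alpha>))"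
      by simp
    have "\<bar>omega k i \<alpha> dt m\<bar> = dt powr \<alpha> * \<bar>1 / Gamma (1 - \<alpha>)\<bar> * \<bar>?S\<bar>"
      by (simp add: omega_eq_sum_left_pieces[OF assms(3) m] f_def \<delta>_def abs_mult)
    also have "\<dots> \<le> dt powr \<alpha> * \<bar>1 / Gamma (1 - \<alpha>)\<bar> * ((\<Sum>j=1..2*k+1. B j) * dt *
        ((?T - grid dt (2 * k + 1)) powr (-\<alpha>) - ?T powr (-\<alpha>)))"
      using S_bound by (intro mult_left_mono) auto
    finally show "\<bar>omega k i \<alpha> dt m\<bar> \<le> dt powr \<alpha> * \<bar>1 / Gamma (1 - \<alpha>)\<bar> * ((\<Sum>j=1..2*k+1. B j) * dt) *
        ((?T - grid dt (2 * k + 1)) powr (-\<alpha>) - ?T powr (-\<alpha>))"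
      by (simp only: mult.assoc)
  qed
qed

lemma tendsto_powr_neg_affine:
  fixes c d \<alpha> :: real
  assumes "0 < c" "0 < \<alpha>"
  shows "(\<lambda>m. (d + c * real m) powr (-\<alpha>)) \<longlonglongrightarrow> 0"
proof (rule tendsto_neg_powr)
  show "filterlim (\<lambda>m. d + c * real m) at_top sequentially"
    by (intro filterlim_tendsto_add_at_top[OF tendsto_const]
        filterlim_tendsto_pos_mult_at_top[OF tendsto_const assms(1) filterlim_real_sequentially])
qed (use assms(2) in simp)

lemma summable_diff_shift:
  fixes h :: "nat \<Rightarrow> 'a::real_normed_vector"
  assumes "h \<longlonglongrightarrow> 0"
  shows "summable (\<lambda>m. h m - h (m + W))"
proof -
  have "summable (\<lambda>m. \<Sum>l<W. h (m + l) - h (m + Suc l))"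
  proof (rule summable_sum)
    fix l
    have "(\<lambda>m. h (m + l)) \<longlonglongrightarrow> 0" using assms by (rule LIMSEQ_ignore_initial_segment)
    then show "summable (\<lambda>m. h (m + l) - h (m + Suc l))" using telescope_summable' by fastforce
  qed
  moreover have "(\<Sum>l<W. h (m + l) - h (m + Suc l)) = h m - h (m + W)" for m
    using sum_lessThan_telescope'[of "\<lambda>l. h (m + l)" W] by simp
  ultimately show ?thesis by simp
qed

theorem lemma3p5:
  fixes \<alpha> dt :: real and k i :: nat
  assumes "0 < \<alpha>" "\<alpha> < 1" "1 \<le> i" "i \<le> k" "k \<le> 6" "0 < dt"
  shows "summable (\<lambda>m. \<bar>omega k i \<alpha> dt m\<bar>)"
proof -
  obtain C where C: "\<And>m. 2 * k + 2 \<le> m \<Longrightarrow> \<bar>omega k i \<alpha> dt m\<bar> \<le>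
      C * ((grid dt (m + k) - grid dt (2 * k + 1)) powr (-\<alpha>) - grid dt (m + k) powr (-\<alpha>))"
    using omega_tail_bound[OF assms(1,3,4,6)] by blast
  define h where "h m = (grid dt (m + k) - grid dt (2 * k + 1)) powr (-\<alpha>)" for m
  have h_shift: "h (m + (2 * k + 1)) = grid dt (m + k) powr (-\<alpha>)" for m
    by (simp add: h_def grid_def algebra_simps)
  have "h = (\<lambda>m. ((real k - real (2 * k + 1)) * dt + dt * real m) powr (-\<alpha>))"
    by (auto simp: h_def grid_def algebra_simps)
  then have "h \<longlonglongrightarrow> 0" using tendsto_powr_neg_affine assms by simp
  then have "summable (\<lambda>m. C * (h m - h (m + (2 * k + 1))))"
    by (intro summable_mult summable_diff_shift)
  then show ?thesis
  proof (rule summable_comparison_test'[where N = "2 * k + 2"])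
    fix m assume "2 * k + 2 \<le> m"
    then show "norm \<bar>omega k i \<alpha> dt m\<bar> \<le> C * (h m - h (m + (2 * k + 1)))"
      using C[of m] unfolding h_shift by (simp add: h_def)
  qed
qed

end
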